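(* Almost surely, for all $1\le k\le\kappa$, $\mathbf w(e_k)\le\frac{2}{k+2}$. In particular $\kappa\le\frac{2n}{\ln n}$.
   Context: Configuration model: $(d_i^-)_{1\le i\le n}$, $(d_i^+)_{1\le i\le n}$ positive integers with $\sum_id_i^-=\sum_id_i^+=m$; each vertex $i\in V=\{1,\dots,n\}$ carries a set $E_i^+$ of $d_i^+$ tails and a set $E_i^-$ of $d_i^-$ heads; $\omega$ is a uniformly random bijection from tails to heads, $\omega(e)=f$ being an arc from the vertex of $e$ to that of $f$. Assume $\min_i\min(d_i^+,d_i^-)\ge2$; $\Delta:=\max_i\max(d_i^+,d_i^-)$, $h=\lfloor\frac{\ln n}{10\ln\Delta}\rfloor$, $t$ a positive integer, $w_{\min}=\frac{\ln n}{n}$. Exploration from a root $i\in V$: initially $\mathcal T=\{i\}$ and all tails/heads unmatched; $\partial_+\mathcal T$ ($\partial_-\mathcal T$) is the set of unmatched tails (heads) whose vertex lies in $\mathcal T$. For $e\in\partial_+\mathcal T$, the height $\mathbf h(e)$ is the number of vertices on the unique directed path in $\mathcal T$ from $i$ to the vertex of $e$ (including it), and the weight $\mathbf w(e)$ is the inverse product of the out-degrees of those vertices. Iterate: select, among $e\in\partial_+\mathcal T$ with $\mathbf h(e)<t-h$ and $\mathbf w(e)>w_{\min}$, one of maximal weight (ties broken by a fixed deterministic order); match it to a uniformly chosen unmatched head $f$; if $f\notin\partial_-\mathcal T$, add arc $ef$ and the vertex of $f$ to $\mathcal T$. Stop when no such tail exists; $\kappa$ is the total number of pairings, and $e_k$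 is the tail selected at step $k$ (with $\mathbf w(e_k)$ its weight when selected). *)

theory Defs
  imports Complex_Main
begin

text \<open>Configuration model. Vertices are 0..<n. Tail (i,a) with a < dout i belongs to
  vertex i; head (j,b) with b < din j belongs to vertex j.\<close>

definition tails :: "nat \<Rightarrow> (nat \<Rightarrow> nat) \<Rightarrow> (nat \<times> nat) set" where
  "tails n dout = {(i, a). i < n \<and> a < dout i}"

definition heads :: "nat \<Rightarrow> (nat \<Rightarrow> nat) \<Rightarrow> (nat \<times> nat) set" where
  "heads n din = {(j, b). j < n \<and> b < din j}"

definition Delta :: "nat \<Rightarrow> (nat \<Rightarrow> nat) \<Rightarrow> (nat \<Rightarrow> nat) \<Rightarrow> nat" where
  "Delta n din dout = Max (din ` {..<n} \<union> dout ` {..<n})"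

definition hpar :: "nat \<Rightarrow> (nat \<Rightarrow> nat) \<Rightarrow> (nat \<Rightarrow> nat) \<Rightarrow> int" where
  "hpar n din dout = \<lfloor>ln (real n) / (10 * ln (real (Delta n din dout)))\<rfloor>"

definition wmin :: "nat \<Rightarrow> real" where
  "wmin n = ln (real n) / real n"

text \<open>State of the exploration. tree: vertex set of T; mtl / mhd: matched tails / heads;
  hgt v, wt v: number of vertices on the (unique) path in T from the root to v (v included)
  and the inverse product of the out-degrees of these vertices; these are the height and
  weight of every tail of v. steps: the selected tails e_1, e_2, ... together with their
  weights at the time of selection.\<close>

record xstate =
  tree :: "nat set"
  mtl :: "(nat \<times> nat) set"
  mhd :: "(nat \<times> nat) set"
  hgt :: "nat \<Rightarrow> nat"
  wt :: "nat \<Rightarrow> real"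
  steps :: "((nat \<times> nat) \<times> real) list"

definition expl_init :: "(nat \<Rightarrow> nat) \<Rightarrow> nat \<Rightarrow> xstate" where
  "expl_init dout i = \<lparr> tree = {i}, mtl = {}, mhd = {}, hgt = (\<lambda>_. 0)(i := 1),
     wt = (\<lambda>_. 0)(i := 1 / real (dout i)), steps = [] \<rparr>"

definition bd_out :: "nat \<Rightarrow> (nat \<Rightarrow> nat) \<Rightarrow> xstate \<Rightarrow> (nat \<times> nat) set" where
  "bd_out n dout s = {e \<in> tails n dout. fst e \<in> tree s \<and> e \<notin> mtl s}"

definition eligible :: "nat \<Rightarrow> (nat \<Rightarrow> nat) \<Rightarrow> (nat \<Rightarrow> nat) \<Rightarrow> nat \<Rightarrow> xstate \<Rightarrow> (nat \<times> nat) set" where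
  "eligible n din dout t s = {e \<in> bd_out n dout s.
      int (hgt s (fst e)) < int t - hpar n din dout \<and> wt s (fst e) > wmin n}"

definition selected :: "nat \<Rightarrow> (nat \<Rightarrow> nat) \<Rightarrow> (nat \<Rightarrow> nat) \<Rightarrow> nat \<Rightarrow> (nat \<times> nat \<Rightarrow> nat)
    \<Rightarrow> xstate \<Rightarrow> nat \<times> nat \<Rightarrow> bool" where
  "selected n din dout t rk s e \<longleftrightarrow> e \<in> eligible n din dout t s \<and>
     (\<forall>e' \<in> eligible n din dout t s. wt s (fst e') < wt s (fst e) \<or>
        (wt s (fst e') = wt s (fst e) \<and> rk e \<le> rk e'))"

text \<open>One step: match the selected tail e to an (arbitrary, i.e. any possible outcome of
  the uniform choice) unmatched head f; if the vertex of f is not in T (i.e. f is not in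
  \<partial>_- T), add the arc ef and the vertex of f to T.\<close>
definition expl_step :: "nat \<Rightarrow> (nat \<Rightarrow> nat) \<Rightarrow> (nat \<Rightarrow> nat) \<Rightarrow> nat \<Rightarrow> (nat \<times> nat \<Rightarrow> nat)
    \<Rightarrow> xstate \<Rightarrow> xstate \<Rightarrow> bool" where
  "expl_step n din dout t rk s s' \<longleftrightarrow> (\<exists>e f. selected n din dout t rk s e \<and>
     f \<in> heads n din - mhd s \<and>
     s' = (let b = s\<lparr> mtl := insert e (mtl s), mhd := insert f (mhd s),
                      steps := steps s @ [(e, wt s (fst e))] \<rparr>
           in if fst f \<in> tree s then b
              else b\<lparr> tree := insert (fst f) (tree s),
                      hgt := (hgt s)(fst f := hgt s (fst e) + 1),
                      wt := (wt s)(fst f := wt s (fst e) / real (dout (fst f))) \<rparr>))"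

definition expl_stop :: "nat \<Rightarrow> (nat \<Rightarrow> nat) \<Rightarrow> (nat \<Rightarrow> nat) \<Rightarrow> nat \<Rightarrow> xstate \<Rightarrow> bool" where
  "expl_stop n din dout t s \<longleftrightarrow> eligible n din dout t s = {}"

end

theory Submission
  imports Defs
begin

text \<open>Every tail carries the weight of its vertex, and weight is conserved: the tails of
  the root weigh 1 in total, matching a tail of weight \<open>x\<close> to a new vertex \<open>v\<close> gives
  the \<open>d\<^sup>+(v)\<close> tails of \<open>v\<close> total weight \<open>x\<close>, and matching it back into the tree loses \<open>x\<close>.
  The selection is greedy, so selected weights never increase. At the \<open>k\<close>-th selection,
  of weight \<open>w\<close>, call a vertex heavy if its weight is at least \<open>w\<close> and light otherwise.
  All matched tails are heavy, so at least \<open>2 #heavy - (k - 1) \<ge> 1\<close> heavy tails are still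
  unmatched; each light vertex was created by a step of weight at least \<open>w\<close>, which its
  unmatched tails still carry; and each step that created no vertex lost at least \<open>w\<close>.
  These are at least \<open>(k + 2) / 2\<close> disjoint portions of weight at least \<open>w\<close> out of total
  mass 1, whence \<open>w \<le> 2 / (k + 2)\<close>. As every selected weight exceeds \<open>ln n / n\<close>, there are
  at most \<open>2 n / ln n\<close> steps.\<close>

definition tails_of :: "nat \<Rightarrow> (nat \<Rightarrow> nat) \<Rightarrow> nat set \<Rightarrow> (nat \<times> nat) set" where
  "tails_of n dout V = {e \<in> tails n dout. fst e \<in> V}"

lemma tails_of_eq_Sigma: "V \<subseteq> {..<n} \<Longrightarrow> tails_of n dout V = Sigma V (\<lambda>v. {..<dout v})"
  by (auto simp: tails_of_def tails_def)

lemma finite_tails_of: "finite (tails_of n dout V)"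
proof -
  have "tails_of n dout V \<subseteq> Sigma {..<n} (\<lambda>v. {..<dout v})"
    by (auto simp: tails_of_def tails_def)
  then show ?thesis
    by (rule finite_subset) auto
qed

lemma card_tails_of: "V \<subseteq> {..<n} \<Longrightarrow> card (tails_of n dout V) = (\<Sum>v\<in>V. dout v)"
  using finite_subset[of V "{..<n}"] by (simp add: tails_of_eq_Sigma)

lemma sum_tails_of:
  fixes g :: "nat \<Rightarrow> 'a::comm_semiring_1"
  assumes "V \<subseteq> {..<n}"
  shows "(\<Sum>e\<in>tails_of n dout V. g (fst e)) = (\<Sum>v\<in>V. of_nat (dout v) * g v)"
proof -
  have "finite V"
    using assms finite_subset by blast
  then have "(\<Sum>v\<in>V. of_nat (dout v) * g v) = (\<Sum>(v, b)\<in>Sigma V (\<lambda>v. {..<dout v}). g v)"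
    by (simp add: sum.Sigma[symmetric])
  then show ?thesis
    using assms by (simp add: tails_of_eq_Sigma split_beta)
qed

lemma bd_out_eq: "bd_out n dout s = tails_of n dout (tree s) - mtl s"
  by (auto simp: bd_out_def tails_of_def)

definition advance :: "(nat \<Rightarrow> nat) \<Rightarrow> xstate \<Rightarrow> nat \<times> nat \<Rightarrow> nat \<times> nat \<Rightarrow> xstate" where
  "advance dout s e f =
    (let b = s\<lparr> mtl := insert e (mtl s), mhd := insert f (mhd s),
                steps := steps s @ [(e, wt s (fst e))] \<rparr>
     in if fst f \<in> tree s then b
        else b\<lparr> tree := insert (fst f) (tree s),
                hgt := (hgt s)(fst f := hgt s (fst e) + 1),
                wt := (wt s)(fst f := wt s (fst e) / real (dout (fst f))) \<rparr>)"

lemma expl_step_iff: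
  "expl_step n din dout t rk s s' \<longleftrightarrow>
     (\<exists>e f. selected n din dout t rk s e \<and> f \<in> heads n din - mhd s \<and> s' = advance dout s e f)"
  unfolding expl_step_def advance_def ..

lemma advance_simps:
  "tree (advance dout s e f) = insert (fst f) (tree s)"
  "mtl (advance dout s e f) = insert e (mtl s)"
  "steps (advance dout s e f) = steps s @ [(e, wt s (fst e))]"
  "hgt (advance dout s e f) =
     (if fst f \<in> tree s then hgt s else (hgt s)(fst f := hgt s (fst e) + 1))"
  "wt (advance dout s e f) =
     (if fst f \<in> tree s then wt s else (wt s)(fst f := wt s (fst e) / real (dout (fst f))))"
  by (simp_all add: advance_def Let_def insert_absorb)

lemma wt_advance_old: "v \<in> tree s \<Longrightarrow> wt (advance dout s e f) v = wt s v"
  by (auto simp: advance_simps)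

lemma hgt_advance_old: "v \<in> tree s \<Longrightarrow> hgt (advance dout s e f) v = hgt s v"
  by (auto simp: advance_simps)

text \<open>\<open>p v\<close> is the step that added the vertex \<open>v\<close> to the tree: the weight recorded
  at that step is the total weight of the tails of \<open>v\<close>.\<close>
definition creation_steps :: "(nat \<Rightarrow> nat) \<Rightarrow> nat \<Rightarrow> xstate \<Rightarrow> (nat \<Rightarrow> nat) \<Rightarrow> bool" where
  "creation_steps dout i s p \<longleftrightarrow>
     inj_on p (tree s - {i}) \<and> p ` (tree s - {i}) \<subseteq> {..<length (steps s)} \<and>
     (\<forall>v\<in>tree s - {i}. snd (steps s ! p v) = real (dout v) * wt s v)"

definition explored_tree :: "nat \<Rightarrow> (nat \<Rightarrow> nat) \<Rightarrow> nat \<Rightarrow> xstate \<Rightarrow> bool" where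
  "explored_tree n dout i s \<longleftrightarrow>
     i \<in> tree s \<and> tree s \<subseteq> {..<n} \<and> mtl s \<subseteq> tails_of n dout (tree s) \<and>
     mtl s = fst ` set (steps s) \<and> distinct (map fst (steps s)) \<and>
     (\<forall>q\<in>set (steps s). snd q = wt s (fst (fst q))) \<and>
     real (dout i) * wt s i = 1 \<and> (\<forall>v\<in>tree s. 0 < wt s v \<and> wt s v \<le> wt s i) \<and>
     (\<exists>p. creation_steps dout i s p)"

lemma explored_tree_init:
  assumes "i < n" and "0 < dout i"
  shows "explored_tree n dout i (expl_init dout i)"
  using assms
  by (auto simp: explored_tree_def creation_steps_def expl_init_def intro!: exI[of _ "\<lambda>_. 0"])

lemma creation_steps_advance:
  assumes p: "creation_steps dout i s p" and iT: "i \<in> tree s" and deg: "0 < dout (fst f)"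
  shows "\<exists>p'. creation_steps dout i (advance dout s e f) p'"
proof (cases "fst f \<in> tree s")
  case True
  then show ?thesis
    using p
    by (intro exI[of _ p]) (auto simp: creation_steps_def advance_simps nth_append insert_absorb)
next
  case False
  let ?v = "fst f" and ?L = "length (steps s)"
  have P: "inj_on p (tree s - {i})" "p ` (tree s - {i}) \<subseteq> {..<?L}"
    "\<forall>v\<in>tree s - {i}. snd (steps s ! p v) = real (dout v) * wt s v"
    using p unfolding creation_steps_def by blast+
  have dom: "tree (advance dout s e f) - {i} = insert ?v (tree s - {i})"
    using False iT by (auto simp: advance_simps)
  have "inj_on (p(?v := ?L)) (tree s - {i})"
    using P(1,2) by (intro inj_on_fun_updI) auto
  then have "inj_on (p(?v := ?L)) (insert ?v (tree s - {i}))"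
    using P(2) False by (auto simp: inj_on_insert)
  moreover have "(p(?v := ?L)) ` insert ?v (tree s - {i}) \<subseteq> {..<Suc ?L}"
    using P(2) False by auto
  moreover have "snd ((steps s @ [(e, wt s (fst e))]) ! (p(?v := ?L)) u) =
      real (dout u) * wt (advance dout s e f) u" if "u \<in> insert ?v (tree s - {i})" for u
  proof (cases "u = ?v")
    case True
    then show ?thesis
      using False deg by (simp add: advance_simps)
  next
    case u: False
    then have "u \<in> tree s - {i}" "p u < ?L"
      using that P(2) by auto
    then show ?thesis
      using u P(3) by (simp add: nth_append wt_advance_old)
  qed
  ultimately have "creation_steps dout i (advance dout s e f) (p(?v := ?L))"
    unfolding creation_steps_def dom by (simp add: advance_simps)
  then show ?thesis
    by blast
qed

lemma explored_tree_advance: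
  assumes inv: "explored_tree n dout i s" and e: "e \<in> bd_out n dout s"
    and f: "fst f < n" and deg: "0 < dout (fst f)"
  shows "explored_tree n dout i (advance dout s e f)"
proof -
  let ?s' = "advance dout s e f"
  have eT: "fst e \<in> tree s" and eM: "e \<notin> mtl s" and etl: "e \<in> tails n dout"
    using e by (auto simp: bd_out_def)
  have iT: "i \<in> tree s" and Tn: "tree s \<subseteq> {..<n}"
    and MT: "mtl s \<subseteq> tails_of n dout (tree s)" and M: "mtl s = fst ` set (steps s)"
    and dist: "distinct (map fst (steps s))"
    and wst: "\<forall>q\<in>set (steps s). snd q = wt s (fst (fst q))"
    and root: "real (dout i) * wt s i = 1"
    and wtT: "\<forall>v\<in>tree s. 0 < wt s v \<and> wt s v \<le> wt s i"
    using inv unfolding explored_tree_def by blast+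
  obtain p where p: "creation_steps dout i s p"
    using inv unfolding explored_tree_def by blast
  have wt_new: "0 < wt ?s' (fst f) \<and> wt ?s' (fst f) \<le> wt s i" if "fst f \<notin> tree s"
  proof -
    have "wt ?s' (fst f) = wt s (fst e) / real (dout (fst f))"
      using that by (simp add: advance_simps)
    moreover have "0 < wt s (fst e)" "wt s (fst e) \<le> wt s i"
      using wtT eT by auto
    moreover have "wt s (fst e) / real (dout (fst f)) \<le> wt s (fst e)"
      using divide_left_mono[of 1 "real (dout (fst f))" "wt s (fst e)"] deg \<open>0 < wt s (fst e)\<close>
      by simp
    ultimately show ?thesis
      using deg by simp
  qed
  have "\<forall>v\<in>tree ?s'. 0 < wt ?s' v \<and> wt ?s' v \<le> wt ?s' i"
    using wtT wt_new iT by (auto simp: advance_simps wt_advance_old)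
  moreover have "\<exists>p. creation_steps dout i ?s' p"
    using p iT deg by (rule creation_steps_advance)
  moreover have "\<forall>q\<in>set (steps ?s'). snd q = wt ?s' (fst (fst q))"
    using wst eT MT M by (auto simp: advance_simps wt_advance_old tails_of_def)
  moreover have "mtl ?s' \<subseteq> tails_of n dout (tree ?s')"
    using MT etl eT by (auto simp: advance_simps tails_of_def)
  moreover have "distinct (map fst (steps ?s'))"
    using dist eM M by (auto simp: advance_simps)
  moreover have "real (dout i) * wt ?s' i = 1"
    using root iT by (simp add: wt_advance_old)
  ultimately show ?thesis
    using iT Tn f M by (simp add: explored_tree_def advance_simps)
qed

lemma card_mtl: "explored_tree n dout i s \<Longrightarrow> card (mtl s) = length (steps s)"
  unfolding explored_tree_def by (metis distinct_card length_map set_map)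

lemma sum_steps_eq_sum_mtl:
  assumes "explored_tree n dout i s"
  shows "(\<Sum>j<length (steps s). snd (steps s ! j)) = (\<Sum>e\<in>mtl s. wt s (fst e))"
proof -
  have dist: "distinct (map fst (steps s))" and M: "mtl s = fst ` set (steps s)"
    and w: "\<forall>q\<in>set (steps s). snd q = wt s (fst (fst q))"
    using assms by (auto simp: explored_tree_def)
  have "(\<Sum>j<length (steps s). snd (steps s ! j)) = sum_list (map snd (steps s))"
    by (simp add: sum_list_sum_nth atLeast0LessThan)
  also have "\<dots> = (\<Sum>q\<in>set (steps s). snd q)"
    using dist by (simp add: sum_list_distinct_conv_sum_set distinct_map)
  also have "\<dots> = (\<Sum>q\<in>set (steps s). wt s (fst (fst q)))"
    using w by (intro sum.cong) auto
  also have "\<dots> = (\<Sum>e\<in>mtl s. wt s (fst e))"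
    using dist by (simp add: M sum.reindex distinct_map)
  finally show ?thesis .
qed

text \<open>The unit weight of the root's tails is split between the unmatched tails and the
  steps that did not create a vertex.\<close>
lemma mass_balance:
  assumes inv: "explored_tree n dout i s" and p: "creation_steps dout i s p"
  shows "(\<Sum>e\<in>bd_out n dout s. wt s (fst e)) +
         (\<Sum>j\<in>{..<length (steps s)} - p ` (tree s - {i}). snd (steps s ! j)) = 1"
proof -
  let ?T = "tree s" and ?P = "p ` (tree s - {i})" and ?L = "length (steps s)"
  let ?w = "\<lambda>e. wt s (fst e)" and ?st = "\<lambda>j. snd (steps s ! j)"
  have T: "?T \<subseteq> {..<n}" "i \<in> ?T" and M: "mtl s \<subseteq> tails_of n dout ?T"
    and root: "real (dout i) * wt s i = 1"
    using inv by (auto simp: explored_tree_def)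
  have finT: "finite ?T"
    using T finite_subset by blast
  have P: "inj_on p (?T - {i})" "?P \<subseteq> {..<?L}"
    "\<forall>v\<in>?T - {i}. ?st (p v) = real (dout v) * wt s v"
    using p by (auto simp: creation_steps_def)
  have "(\<Sum>e\<in>tails_of n dout ?T. ?w e) = (\<Sum>v\<in>?T. real (dout v) * wt s v)"
    by (rule sum_tails_of[OF T(1)])
  also have "\<dots> = 1 + (\<Sum>v\<in>?T - {i}. real (dout v) * wt s v)"
    using finT T root by (simp add: sum.remove)
  also have "\<dots> = 1 + (\<Sum>j\<in>?P. ?st j)"
    using P by (simp add: sum.reindex)
  finally have tails: "(\<Sum>e\<in>tails_of n dout ?T. ?w e) = 1 + (\<Sum>j\<in>?P. ?st j)" .
  have "(\<Sum>e\<in>tails_of n dout ?T. ?w e) = (\<Sum>e\<in>bd_out n dout s. ?w e) + (\<Sum>e\<in>mtl s. ?w e)"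
    using M by (simp add: bd_out_eq sum.subset_diff[OF _ finite_tails_of])
  also have "(\<Sum>e\<in>mtl s. ?w e) = (\<Sum>j\<in>?P. ?st j) + (\<Sum>j\<in>{..<?L} - ?P. ?st j)"
    using P sum_steps_eq_sum_mtl[OF inv] by (simp add: sum.subset_diff[of ?P])
  finally show ?thesis
    using tails by simp
qed

definition heavy :: "xstate \<Rightarrow> real \<Rightarrow> nat set" where
  "heavy s w = {v \<in> tree s. w \<le> wt s v}"

definition light :: "nat \<Rightarrow> xstate \<Rightarrow> real \<Rightarrow> nat set" where
  "light i s w = {v \<in> tree s - {i}. wt s v < w}"

lemma mtl_subset_tails_heavy:
  assumes "explored_tree n dout i s" and "\<forall>q\<in>set (steps s). w \<le> snd q"
  shows "mtl s \<subseteq> tails_of n dout (heavy s w)"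
  using assms by (fastforce simp: explored_tree_def heavy_def tails_of_def)

lemma tree_eq_heavy_Un_light:
  assumes "explored_tree n dout i s" and "w \<le> wt s i"
  shows "tree s = heavy s w \<union> light i s w" and "heavy s w \<inter> light i s w = {}"
  using assms by (auto simp: explored_tree_def heavy_def light_def)

lemma count_heavy_light:
  assumes inv: "explored_tree n dout i s" and p: "creation_steps dout i s p"
    and deg: "\<forall>j<n. 2 \<le> dout j" and e: "e \<in> bd_out n dout s"
    and dominated: "\<forall>q\<in>set (steps s). wt s (fst e) \<le> snd q"
  defines "w \<equiv> wt s (fst e)" and "L \<equiv> length (steps s)"
  shows "L + 3 \<le> 2 * (card (tails_of n dout (heavy s w) - mtl s) + card (light i s w)
                      + card ({..<L} - p ` (tree s - {i})))"
proof -
  let ?A = "heavy s w" and ?B = "light i s w" and ?U = "tails_of n dout (heavy s w) - mtl s"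
  have Tn: "tree s \<subseteq> {..<n}" and iT: "i \<in> tree s"
    and wtT: "\<forall>v\<in>tree s. wt s v \<le> wt s i"
    using inv unfolding explored_tree_def by blast+
  have P: "inj_on p (tree s - {i})" "p ` (tree s - {i}) \<subseteq> {..<L}"
    using p unfolding creation_steps_def L_def by blast+
  have eT: "fst e \<in> tree s"
    using e by (simp add: bd_out_def)
  have TAB: "tree s = ?A \<union> ?B" "?A \<inter> ?B = {}"
    using tree_eq_heavy_Un_light[OF inv] wtT eT by (auto simp: w_def)
  have finT: "finite (tree s)"
    using Tn finite_subset by blast
  have An: "?A \<subseteq> {..<n}"
    using Tn TAB by blast
  have MA: "mtl s \<subseteq> tails_of n dout ?A"
    using mtl_subset_tails_heavy[OF inv] dominated by (simp add: w_def)
  have "card (tree s) = card ?A + card ?B"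
    using finT TAB by (metis card_Un_disjoint finite_Un)
  moreover have "card ({..<L} - p ` (tree s - {i})) + card (tree s) = L + 1"
  proof -
    have "card (p ` (tree s - {i})) = card (tree s) - 1"
      using P(1) finT iT by (simp add: card_image)
    moreover have "0 < card (tree s)"
      using finT iT card_gt_0_iff by blast
    ultimately show ?thesis
      using P(2) card_mono[OF _ P(2)] by (simp add: card_Diff_subset finite_subset[OF P(2)])
  qed
  moreover have "card ?U + L = (\<Sum>v\<in>?A. dout v)"
    using MA card_mtl[OF inv] card_tails_of[OF An] card_mono[OF finite_tails_of MA]
    by (simp add: card_Diff_subset finite_subset[OF MA finite_tails_of] L_def)
  moreover have "2 * card ?A \<le> (\<Sum>v\<in>?A. dout v)"
    using sum_bounded_below[of ?A 2 dout] An deg by (auto simp: mult.commute)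
  moreover have "e \<in> ?U"
    using e by (auto simp: bd_out_def heavy_def tails_of_def w_def)
  then have "1 \<le> card ?U"
    using finite_tails_of[of n dout ?A] by (auto simp: Suc_le_eq card_gt_0_iff)
  ultimately show ?thesis
    unfolding distrib_left by linarith
qed

lemma weighted_count_heavy_light:
  assumes inv: "explored_tree n dout i s" and p: "creation_steps dout i s p"
    and dominated: "\<forall>q\<in>set (steps s). w \<le> snd q"
  defines "L \<equiv> length (steps s)"
  shows "w * real (card (tails_of n dout (heavy s w) - mtl s) + card (light i s w)
                   + card ({..<L} - p ` (tree s - {i}))) \<le> 1"
proof -
  let ?U = "tails_of n dout (heavy s w) - mtl s" and ?B = "light i s w"
    and ?Lo = "{..<L} - p ` (tree s - {i})" and ?wt = "\<lambda>e. wt s (fst e)"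
  have Tn: "tree s \<subseteq> {..<n}" and wtT: "\<forall>v\<in>tree s. 0 < wt s v"
    using inv unfolding explored_tree_def by blast+
  have P: "p ` (tree s - {i}) \<subseteq> {..<L}"
    "\<forall>v\<in>tree s - {i}. snd (steps s ! p v) = real (dout v) * wt s v"
    using p unfolding creation_steps_def L_def by blast+
  have step_ge: "w \<le> snd (steps s ! j)" if "j < L" for j
    using that dominated by (simp add: L_def)
  have MA: "mtl s \<subseteq> tails_of n dout (heavy s w)"
    using inv dominated by (rule mtl_subset_tails_heavy)
  have Bn: "?B \<subseteq> {..<n}"
    using Tn by (auto simp: light_def)
  have "real (card ?U) * w \<le> (\<Sum>e\<in>?U. ?wt e)"
    by (rule sum_bounded_below) (simp add: tails_of_def heavy_def)
  moreover have "real (card ?B) * w \<le> (\<Sum>e\<in>tails_of n dout ?B. ?wt e)"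
  proof -
    have "real (card ?B) * w \<le> (\<Sum>v\<in>?B. real (dout v) * wt s v)"
    proof (rule sum_bounded_below)
      fix v
      assume "v \<in> ?B"
      then have "v \<in> tree s - {i}"
        by (simp add: light_def)
      then show "w \<le> real (dout v) * wt s v"
        using P step_ge[of "p v"] by auto
    qed
    then show ?thesis
      by (simp add: sum_tails_of[OF Bn])
  qed
  moreover have
    "(\<Sum>e\<in>?U. ?wt e) + (\<Sum>e\<in>tails_of n dout ?B. ?wt e) \<le> (\<Sum>e\<in>bd_out n dout s. ?wt e)"
  proof -
    have disj: "?U \<inter> tails_of n dout ?B = {}"
      by (auto simp: tails_of_def heavy_def light_def)
    have sub: "?U \<union> tails_of n dout ?B \<subseteq> bd_out n dout s"
      using MA by (auto simp: bd_out_eq tails_of_def heavy_def light_def)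
    have "\<forall>e\<in>bd_out n dout s. 0 \<le> ?wt e"
      using wtT by (auto simp: bd_out_def less_imp_le)
    then have "(\<Sum>e\<in>?U \<union> tails_of n dout ?B. ?wt e) \<le> (\<Sum>e\<in>bd_out n dout s. ?wt e)"
      using sub by (intro sum_mono2) (auto simp: bd_out_eq finite_tails_of)
    then show ?thesis
      using disj by (simp add: sum.union_disjoint finite_tails_of)
  qed
  moreover have "real (card ?Lo) * w \<le> (\<Sum>j\<in>?Lo. snd (steps s ! j))"
    by (rule sum_bounded_below) (simp add: step_ge)
  ultimately show ?thesis
    using mass_balance[OF inv p] by (simp add: L_def algebra_simps)
qed

lemma unmatched_weight_bound:
  assumes inv: "explored_tree n dout i s" and deg: "\<forall>j<n. 2 \<le> dout j"
    and e: "e \<in> bd_out n dout s"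
    and dominated: "\<forall>q\<in>set (steps s). wt s (fst e) \<le> snd q"
  shows "(real (length (steps s)) + 3) * wt s (fst e) \<le> 2"
proof -
  obtain p where p: "creation_steps dout i s p"
    using inv unfolding explored_tree_def by blast
  let ?w = "wt s (fst e)" and ?L = "length (steps s)"
  let ?N = "card (tails_of n dout (heavy s ?w) - mtl s) + card (light i s ?w)
            + card ({..<?L} - p ` (tree s - {i}))"
  have "real ?L + 3 \<le> 2 * real ?N"
    using count_heavy_light[OF inv p deg e dominated] by linarith
  moreover have "?w * real ?N \<le> 1"
    using weighted_count_heavy_light[OF inv p dominated] .
  moreover have "0 < ?w"
    using inv e by (simp add: explored_tree_def bd_out_def)
  ultimately have "(real ?L + 3) * ?w \<le> 2 * (?w * real ?N)"
    using mult_right_mono[of "real ?L + 3" "2 * real ?N" ?w] by (simp add: algebra_simps)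
  also have "\<dots> \<le> 2"
    using \<open>?w * real ?N \<le> 1\<close> by simp
  finally show ?thesis .
qed

definition greedy_inv :: "nat \<Rightarrow> (nat \<Rightarrow> nat) \<Rightarrow> (nat \<Rightarrow> nat) \<Rightarrow> nat \<Rightarrow> nat \<Rightarrow> xstate \<Rightarrow> bool" where
  "greedy_inv n din dout t i s \<longleftrightarrow> explored_tree n dout i s \<and>
     (\<forall>e\<in>eligible n din dout t s. \<forall>q\<in>set (steps s). wt s (fst e) \<le> snd q) \<and>
     (\<forall>q\<in>set (steps s). wmin n < snd q) \<and>
     (\<forall>k\<in>{1..length (steps s)}. snd (steps s ! (k - 1)) \<le> 2 / (real k + 2))"

lemma greedy_inv_init:
  assumes "i < n" and "0 < dout i"
  shows "greedy_inv n din dout t i (expl_init dout i)"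
  using explored_tree_init[of i n dout] assms by (simp add: greedy_inv_def expl_init_def)

lemma wmin_nonneg: "0 \<le> wmin n"
  by (cases "n = 0") (simp_all add: wmin_def)

lemma eligible_advance_old:
  assumes e': "e' \<in> eligible n din dout t (advance dout s e f)" and old: "fst e' \<in> tree s"
  shows "e' \<in> eligible n din dout t s"
proof -
  have "hgt (advance dout s e f) (fst e') = hgt s (fst e')"
    "wt (advance dout s e f) (fst e') = wt s (fst e')"
    using old by (simp_all add: hgt_advance_old wt_advance_old)
  then show ?thesis
    using e' old by (auto simp: eligible_def bd_out_def advance_simps(1,2))
qed

lemma eligible_advance_le_selected:
  assumes sel: "selected n din dout t rk s e" and deg: "1 \<le> dout (fst f)"
    and e': "e' \<in> eligible n din dout t (advance dout s e f)"
  shows "wt (advance dout s e f) (fst e') \<le> wt s (fst e)"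
proof (cases "fst e' \<in> tree s")
  case True
  have "e' \<in> eligible n din dout t s"
    using e' True by (rule eligible_advance_old)
  then show ?thesis
    using sel True by (auto simp: selected_def wt_advance_old)
next
  case False
  then have "fst e' = fst f" "fst f \<notin> tree s"
    using e' by (auto simp: eligible_def bd_out_def advance_simps(1))
  moreover have "0 \<le> wt s (fst e)"
    using sel wmin_nonneg[of n] by (auto simp: selected_def eligible_def)
  ultimately show ?thesis
    using deg divide_left_mono[of 1 "real (dout (fst f))" "wt s (fst e)"]
    by (simp add: advance_simps)
qed

lemma greedy_inv_advance:
  assumes inv: "greedy_inv n din dout t i s" and deg: "\<forall>j<n. 2 \<le> dout j"
    and sel: "selected n din dout t rk s e" and f: "fst f < n"
  shows "greedy_inv n din dout t i (advance dout s e f)"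
proof -
  let ?s' = "advance dout s e f" and ?x = "wt s (fst e)" and ?L = "length (steps s)"
  have tree: "explored_tree n dout i s"
    and dom: "\<forall>e\<in>eligible n din dout t s. \<forall>q\<in>set (steps s). wt s (fst e) \<le> snd q"
    and above: "\<forall>q\<in>set (steps s). wmin n < snd q"
    and bound: "\<forall>k\<in>{1..?L}. snd (steps s ! (k - 1)) \<le> 2 / (real k + 2)"
    using inv unfolding greedy_inv_def by blast+
  have el: "e \<in> eligible n din dout t s"
    using sel by (simp add: selected_def)
  then have bd: "e \<in> bd_out n dout s"
    by (simp add: eligible_def)
  have x_dom: "\<forall>q\<in>set (steps s). ?x \<le> snd q"
    using dom el by blast
  have "(real ?L + 3) * ?x \<le> 2"
    using tree deg bd x_dom by (rule unmatched_weight_bound)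
  then have x_bound: "?x \<le> 2 / (real (Suc ?L) + 2)"
    by (simp add: field_simps)
  have "explored_tree n dout i ?s'"
    using tree bd f by (rule explored_tree_advance) (use deg f in auto)
  moreover have "\<forall>e'\<in>eligible n din dout t ?s'. \<forall>q\<in>set (steps ?s'). wt ?s' (fst e') \<le> snd q"
  proof (intro ballI)
    fix e' q
    assume e': "e' \<in> eligible n din dout t ?s'" and q: "q \<in> set (steps ?s')"
    have "wt ?s' (fst e') \<le> ?x"
      using deg f by (intro eligible_advance_le_selected[OF sel _ e']) auto
    also have "?x \<le> snd q"
      using q x_dom by (auto simp: advance_simps)
    finally show "wt ?s' (fst e') \<le> snd q" .
  qed
  moreover have "\<forall>q\<in>set (steps ?s'). wmin n < snd q"
    using above el by (simp add: advance_simps eligible_def)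
  moreover have "\<forall>k\<in>{1..length (steps ?s')}. snd (steps ?s' ! (k - 1)) \<le> 2 / (real k + 2)"
  proof
    fix k
    assume k: "k \<in> {1..length (steps ?s')}"
    show "snd (steps ?s' ! (k - 1)) \<le> 2 / (real k + 2)"
    proof (cases "k = Suc ?L")
      case True
      then show ?thesis
        using x_bound by (simp add: advance_simps)
    next
      case False
      then have "k \<in> {1..?L}"
        using k by (auto simp: advance_simps)
      then show ?thesis
        using bound by (auto simp: advance_simps nth_append)
    qed
  qed
  ultimately show ?thesis
    by (simp add: greedy_inv_def)
qed

lemma length_mul_ln_le:
  assumes "0 < n" and above: "\<forall>q\<in>set xs. wmin n < snd q"
    and bound: "\<forall>k\<in>{1..length xs}. snd (xs ! (k - 1)) \<le> 2 / (real k + 2)"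
  shows "real (length xs) * ln (real n) \<le> 2 * real n"
proof (cases "xs = []")
  case True
  then show ?thesis
    by simp
next
  case False
  let ?L = "length xs"
  have "wmin n < snd (xs ! (?L - 1))"
    using above False by simp
  also have "\<dots> \<le> 2 / (real ?L + 2)"
    using bspec[OF bound, of ?L] False by (simp add: Suc_le_eq)
  finally have "ln (real n) / real n < 2 / (real ?L + 2)"
    by (simp add: wmin_def)
  then have "ln (real n) * (real ?L + 2) < 2 * real n"
    using assms(1) by (simp add: field_simps)
  moreover have "0 \<le> ln (real n)"
    using assms(1) by simp
  ultimately show ?thesis
    by (simp add: algebra_simps)
qed

theorem lemma3:
  fixes n m t :: nat and din dout :: "nat \<Rightarrow> nat" and rk :: "nat \<times> nat \<Rightarrow> nat"
    and i :: nat and s :: xstate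
  assumes "i < n"
    and "(\<Sum>j<n. din j) = m" and "(\<Sum>j<n. dout j) = m"
    and "\<forall>j<n. 2 \<le> din j \<and> 2 \<le> dout j"
    and "0 < t"
    and "inj_on rk (tails n dout)"
    and "(expl_step n din dout t rk)\<^sup>*\<^sup>* (expl_init dout i) s"
    and "expl_stop n din dout t s"
  shows "(\<forall>k\<in>{1..length (steps s)}. snd (steps s ! (k - 1)) \<le> 2 / (real k + 2))
         \<and> real (length (steps s)) * ln (real n) \<le> 2 * real n"
proof -
  have deg: "\<forall>j<n. 2 \<le> dout j"
    using assms(4) by blast
  have "greedy_inv n din dout t i s"
    using assms(7)
  proof (induction rule: rtranclp_induct)
    case base
    show ?case
      using assms(1) deg by (intro greedy_inv_init) auto
  next
    case (step s s')
    then show ?case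
      using deg greedy_inv_advance by (fastforce simp: expl_step_iff heads_def)
  qed
  then show ?thesis
    using assms(1) length_mul_ln_le[of n "steps s"] by (auto simp: greedy_inv_def)
qed

end
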